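(* Let $k\ge2$, $n\ge k$, $N=\binom nk$ and $1\le M\le N-1$. Let $H$ be the graph whose vertices are the labeled $k$-uniform hypergraphs on $[n]$ with exactly $M$ hyperedges, two hypergraphs $\mathcal H_1,\mathcal H_2$ being adjacent iff there are distinct $k$-sets $h_1\in E(\mathcal H_1)\setminus E(\mathcal H_2)$, $h_2\in E(\mathcal H_2)\setminus E(\mathcal H_1)$ with $\mathcal H_1-h_1=\mathcal H_2-h_2$. Let $m_{\mathcal H}(\mathcal H')=\frac{1}{M(N-M)+1}$ if $\mathcal H'=\mathcal H$ or $\mathcal H'$ is adjacent to $\mathcal H$, and $0$ otherwise. Then for all distinct $\mathcal H_1,\mathcal H_2\in V(H)$, \[\kappa(\mathcal H_1,\mathcal H_2)\ge\frac{N}{M(N-M)+1}.\]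
   Context: $\mathcal H-h$ denotes the hypergraph obtained by deleting hyperedge $h$. For a graph $H$ with random walk $m$ (each $m_x$ a probability distribution supported on $x$ and its neighbors), $d$ the graph distance on $H$, the transportation distance is $W(m_1,m_2)=\inf_A\sum_{x,y}A(x,y)d(x,y)$ over couplings $A$ of $m_1,m_2$, and the Ollivier Ricci curvature is $\kappa(x,y)=1-W(m_x,m_y)/d(x,y)$. *)

theory Defs
  imports Complex_Main
begin

definition ksets :: "nat \<Rightarrow> nat \<Rightarrow> nat set set" where
  "ksets n k = {e. e \<subseteq> {1..n} \<and> card e = k}"

definition hverts :: "nat \<Rightarrow> nat \<Rightarrow> nat \<Rightarrow> nat set set set" where
  "hverts n k M = {E. E \<subseteq> ksets n k \<and> card E = M}"

definition hadj :: "nat \<Rightarrow> nat \<Rightarrow> nat \<Rightarrow> nat set set \<Rightarrow> nat set set \<Rightarrow> bool" where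
  "hadj n k M H1 H2 \<longleftrightarrow> H1 \<in> hverts n k M \<and> H2 \<in> hverts n k M \<and>
     (\<exists>h1 h2. h1 \<in> H1 - H2 \<and> h2 \<in> H2 - H1 \<and> h1 \<noteq> h2 \<and> H1 - {h1} = H2 - {h2})"

definition gdist :: "('a \<Rightarrow> 'a \<Rightarrow> bool) \<Rightarrow> 'a \<Rightarrow> 'a \<Rightarrow> real" where
  "gdist adj x y = real (LEAST l. \<exists>p. length p = Suc l \<and> hd p = x \<and> last p = y \<and>
       (\<forall>i<l. adj (p ! i) (p ! Suc i)))"

definition hwalk :: "nat \<Rightarrow> nat \<Rightarrow> nat \<Rightarrow> nat set set \<Rightarrow> nat set set \<Rightarrow> real" where
  "hwalk n k M H H' = (if H' = H \<or> hadj n k M H H'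
      then 1 / (real M * (real (n choose k) - real M) + 1) else 0)"

definition coupling :: "'a set \<Rightarrow> ('a \<Rightarrow> real) \<Rightarrow> ('a \<Rightarrow> real) \<Rightarrow> ('a \<Rightarrow> 'a \<Rightarrow> real) \<Rightarrow> bool" where
  "coupling V m1 m2 A \<longleftrightarrow> (\<forall>x y. A x y \<ge> 0) \<and> (\<forall>x y. (x \<notin> V \<or> y \<notin> V) \<longrightarrow> A x y = 0) \<and>
     (\<forall>x\<in>V. (\<Sum>y\<in>V. A x y) = m1 x) \<and> (\<forall>y\<in>V. (\<Sum>x\<in>V. A x y) = m2 y)"

definition transport :: "'a set \<Rightarrow> ('a \<Rightarrow> 'a \<Rightarrow> real) \<Rightarrow> ('a \<Rightarrow> real) \<Rightarrow> ('a \<Rightarrow> real) \<Rightarrow> real" where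
  "transport V d m1 m2 = Inf {(\<Sum>x\<in>V. \<Sum>y\<in>V. A x y * d x y) | A. coupling V m1 m2 A}"

definition ollivier :: "'a set \<Rightarrow> ('a \<Rightarrow> 'a \<Rightarrow> bool) \<Rightarrow> ('a \<Rightarrow> 'a \<Rightarrow> real) \<Rightarrow> 'a \<Rightarrow> 'a \<Rightarrow> real" where
  "ollivier V adj m x y = 1 - transport V (gdist adj) (m x) (m y) / gdist adj x y"

end

theory Submission
  imports Defs "HOL-Combinatorics.Transposition"
begin

text \<open>
  Adjacent hypergraphs \<open>x\<close> and \<open>y = x - a + b\<close> are swapped by the transposition of the
  k-sets \<open>a\<close> and \<open>b\<close>, which induces an automorphism of \<open>H\<close>; it maps the neighbourhood
  of \<open>x\<close> onto that of \<open>y\<close> and moves every hypergraph by at most one edge exchange.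
  Fixing the (at least \<open>N\<close>) common neighbours instead, and applying the transposition
  elsewhere, gives a transport plan from \<open>m\<^sub>x\<close> to \<open>m\<^sub>y\<close> moving at most \<open>M(N-M)+1-N\<close> of
  the point masses \<open>1/(M(N-M)+1)\<close>, each by distance one. Composing such plans along a
  geodesic gives \<open>W(m\<^sub>H\<^sub>1, m\<^sub>H\<^sub>2) \<le> d(H\<^sub>1,H\<^sub>2)(M(N-M)+1-N)/(M(N-M)+1)\<close>.
\<close>

definition has_walk :: "('a \<Rightarrow> 'a \<Rightarrow> bool) \<Rightarrow> 'a \<Rightarrow> 'a \<Rightarrow> nat \<Rightarrow> bool" where
  "has_walk adj x y l \<longleftrightarrow> (\<exists>p. length p = Suc l \<and> hd p = x \<and> last p = y \<and>
       (\<forall>i<l. adj (p ! i) (p ! Suc i)))"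

lemma gdist_eq_Least: "gdist adj x y = real (LEAST l. has_walk adj x y l)"
  unfolding gdist_def has_walk_def by simp

lemma has_walk_0_iff: "has_walk adj x y 0 \<longleftrightarrow> x = y"
  unfolding has_walk_def by (auto simp: length_Suc_conv)

lemma has_walk_Suc_iff:
  "has_walk adj x z (Suc l) \<longleftrightarrow> (\<exists>y. has_walk adj x y l \<and> adj y z)"
proof
  assume "has_walk adj x z (Suc l)"
  then obtain p where p: "length p = Suc (Suc l)" "hd p = x" "last p = z"
      "\<forall>i<Suc l. adj (p ! i) (p ! Suc i)"
    unfolding has_walk_def by blast
  have "length (butlast p) = Suc l" using p(1) by simp
  moreover from this have "butlast p \<noteq> []" by (metis list.size(3) nat.distinct(1))
  moreover have "p \<noteq> []" using p(1) by auto
  ultimately have "has_walk adj x (p ! l) l"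
    unfolding has_walk_def using p
    by (intro exI[of _ "butlast p"]) (auto simp: hd_conv_nth nth_butlast last_conv_nth)
  moreover have "adj (p ! l) z"
    using p by (metis diff_Suc_1 last_conv_nth lessI list.size(3) nat.distinct(1))
  ultimately show "\<exists>y. has_walk adj x y l \<and> adj y z" by blast
next
  assume "\<exists>y. has_walk adj x y l \<and> adj y z"
  then obtain y p where p: "length p = Suc l" "hd p = x" "last p = y"
      "\<forall>i<l. adj (p ! i) (p ! Suc i)" and "adj y z"
    unfolding has_walk_def by blast
  have "p \<noteq> []" using p(1) by auto
  moreover from this have "p ! l = y" using p(1,3) by (simp add: last_conv_nth)
  ultimately show "has_walk adj x z (Suc l)"
    unfolding has_walk_def using p \<open>adj y z\<close>
    by (intro exI[of _ "p @ [z]"]) (auto simp: nth_append less_Suc_eq)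
qed

lemma gdist_refl [simp]: "gdist adj x x = 0"
  unfolding gdist_eq_Least using has_walk_0_iff[of adj x x] by (simp add: Least_eq_0)

lemma shortest_walk:
  assumes "has_walk adj x y l"
  obtains l' where "has_walk adj x y l'" "gdist adj x y = real l'"
  using LeastI[of "has_walk adj x y", OF assms] by (simp add: gdist_eq_Least)

lemma gdist_snoc:
  assumes "has_walk adj x y l" "adj y z"
  shows "gdist adj x z \<le> gdist adj x y + 1"
proof -
  obtain l' where "has_walk adj x y l'" and dist: "gdist adj x y = real l'"
    using shortest_walk[OF assms(1)] .
  then have "has_walk adj x z (Suc l')"
    unfolding has_walk_Suc_iff using assms(2) by blast
  then have "(LEAST l. has_walk adj x z l) \<le> Suc l'" by (rule Least_le)
  then show ?thesis unfolding dist by (simp add: gdist_eq_Least)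
qed

lemma transport_le_bij_cost:
  fixes d :: "'a \<Rightarrow> 'a \<Rightarrow> real"
  assumes "finite V" "X \<subseteq> V" "Y \<subseteq> V" "bij_betw F X Y" "c \<ge> 0"
    and d_nonneg: "\<And>x y. x \<in> V \<Longrightarrow> y \<in> V \<Longrightarrow> d x y \<ge> 0"
    and m1: "\<And>z. z \<in> V \<Longrightarrow> m1 z = (if z \<in> X then c else 0)"
    and m2: "\<And>z. z \<in> V \<Longrightarrow> m2 z = (if z \<in> Y then c else 0)"
  shows "transport V d m1 m2 \<le> c * (\<Sum>x\<in>X. d x (F x))"
proof -
  define A where "A z w = (if z \<in> X \<and> w = F z then c else 0)" for z w
  have FY: "F z \<in> Y" if "z \<in> X" for z using assms(4) that bij_betwE by blast
  have row: "(\<Sum>w\<in>V. A z w * g w) = (if z \<in> X then c * g (F z) else 0)" for z g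
  proof (cases "z \<in> X")
    case True
    then have "(\<Sum>w\<in>V. A z w * g w) = (\<Sum>w\<in>V. if w = F z then c * g (F z) else 0)"
      by (intro sum.cong) (auto simp: A_def)
    then show ?thesis using True FY assms(1,3) by auto
  qed (simp add: A_def)
  have column: "(\<Sum>z\<in>V. A z w) = (if w \<in> Y then c else 0)" for w
  proof (cases "w \<in> Y")
    case True
    then obtain z0 where z0: "z0 \<in> X" "w = F z0"
      using assms(4) by (auto simp: bij_betw_def)
    have "A z w = (if z = z0 then c else 0)" for z
      using z0 assms(4) by (auto simp: A_def bij_betw_def inj_on_def)
    then show ?thesis using True z0 assms(1,2) by (auto simp: sum.delta)
  qed (use FY in \<open>auto simp: A_def intro!: sum.neutral\<close>)
  have "coupling V m1 m2 A"
    unfolding coupling_def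
    using row[of _ "\<lambda>_. 1"] column FY assms(2,3,5) m1 m2 by (auto simp: A_def subset_iff)
  then have "transport V d m1 m2 \<le> (\<Sum>x\<in>V. \<Sum>y\<in>V. A x y * d x y)"
    unfolding transport_def
  proof (intro cInf_lower bdd_belowI[of _ 0])
    fix s assume "s \<in> {\<Sum>x\<in>V. \<Sum>y\<in>V. B x y * d x y |B. coupling V m1 m2 B}"
    then show "0 \<le> s"
      by (auto simp: coupling_def intro!: sum_nonneg mult_nonneg_nonneg d_nonneg)
  qed blast
  also have "\<dots> = (\<Sum>x\<in>V. if x \<in> X then c * d x (F x) else 0)"
    by (simp add: row)
  also have "\<dots> = c * (\<Sum>x\<in>X. d x (F x))"
    using assms(1,2) by (simp add: sum.If_cases Int_absorb1 sum_distrib_left)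
  finally show ?thesis .
qed

lemma bij_betw_fixing_common:
  assumes "finite X" "bij_betw T X Y" "\<And>z. z \<in> X \<Longrightarrow> T (T z) = z"
  shows "bij_betw (\<lambda>z. if z \<in> Y then z else T z) X Y"
proof -
  let ?f = "\<lambda>z. if z \<in> Y then z else T z"
  have TY: "T z \<in> Y" if "z \<in> X" for z using assms(2) that bij_betwE by blast
  have not_image: "z \<noteq> T z'" if "z \<in> X" "z' \<in> X" "z' \<notin> Y" for z z'
    using that TY assms(3) by metis
  have inj: "inj_on ?f X"
    using not_image bij_betw_imp_inj_on[OF assms(2)] unfolding inj_on_def
    by (auto split: if_splits)
  have "finite Y" using assms(1,2) bij_betw_finite by blast
  moreover have "?f ` X \<subseteq> Y" using TY by auto
  moreover have "card (?f ` X) = card Y"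
    using card_image[OF inj] bij_betw_same_card[OF assms(2)] by simp
  ultimately have "?f ` X = Y" by (rule card_subset_eq)
  then show ?thesis using inj by (simp add: bij_betw_def)
qed

lemma bij_along_walk:
  fixes adj :: "'a \<Rightarrow> 'a \<Rightarrow> bool" and N :: "'a \<Rightarrow> 'a set" and C :: real
  assumes connected: "\<And>x y. x \<in> V \<Longrightarrow> y \<in> V \<Longrightarrow> \<exists>l. has_walk adj x y l"
    and N_subset: "\<And>v. v \<in> V \<Longrightarrow> N v \<subseteq> V"
    and adj_in: "\<And>v w. adj v w \<Longrightarrow> v \<in> V \<and> w \<in> V"
    and step: "\<And>v w. adj v w \<Longrightarrow> \<exists>f. bij_betw f (N v) (N w) \<and>
                  (\<forall>z\<in>N v. f z = z \<or> adj z (f z)) \<and> (\<Sum>z\<in>N v. of_bool (f z \<noteq> z)) \<le> C"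
    and "has_walk adj x y l" "x \<in> V"
  shows "\<exists>F. bij_betw F (N x) (N y) \<and> (\<Sum>z\<in>N x. gdist adj z (F z)) \<le> real l * C"
  using \<open>has_walk adj x y l\<close>
proof (induction l arbitrary: y)
  case 0
  then show ?case by (intro exI[of _ id]) (simp add: has_walk_0_iff bij_betw_def)
next
  case (Suc l)
  then obtain y' where "has_walk adj x y' l" and adj: "adj y' y"
    using has_walk_Suc_iff by metis
  then obtain F where F: "bij_betw F (N x) (N y')"
    and cost: "(\<Sum>z\<in>N x. gdist adj z (F z)) \<le> real l * C"
    using Suc.IH by blast
  obtain f where f: "bij_betw f (N y') (N y)" "\<forall>w\<in>N y'. f w = w \<or> adj w (f w)"
    and moved: "(\<Sum>w\<in>N y'. of_bool (f w \<noteq> w)) \<le> C"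
    using step[OF adj] by blast
  have "gdist adj z (f (F z)) \<le> gdist adj z (F z) + of_bool (f (F z) \<noteq> F z)"
    if "z \<in> N x" for z
  proof (cases "f (F z) = F z")
    case False
    have "F z \<in> N y'" using F that bij_betwE by blast
    moreover have "z \<in> V" "y' \<in> V" using that N_subset \<open>x \<in> V\<close> adj_in[OF adj] by auto
    ultimately obtain l' where "has_walk adj z (F z) l'" "adj (F z) (f (F z))"
      using connected N_subset f(2) False by blast
    then show ?thesis using gdist_snoc False by simp
  qed simp
  then have "(\<Sum>z\<in>N x. gdist adj z ((f \<circ> F) z))
      \<le> (\<Sum>z\<in>N x. gdist adj z (F z)) + (\<Sum>z\<in>N x. of_bool (f (F z) \<noteq> F z))"
    by (simp add: sum.distrib[symmetric] sum_mono)
  also have "(\<Sum>z\<in>N x. of_bool (f (F z) \<noteq> F z)) = (\<Sum>w\<in>N y'. of_bool (f w \<noteq> w))"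
    by (rule sum.reindex_bij_betw[OF F])
  finally have "(\<Sum>z\<in>N x. gdist adj z ((f \<circ> F) z)) \<le> real (Suc l) * C"
    using cost moved by (simp add: algebra_simps)
  then show ?case using bij_betw_trans[OF F f(1)] by blast
qed

lemma finite_ksets: "finite (ksets n k)"
  unfolding ksets_def by (rule finite_subset[of _ "Pow {1..n}"]) auto

lemma card_ksets: "card (ksets n k) = n choose k"
  unfolding ksets_def using n_subsets[of "{1..n}" k] by simp

lemma finite_hverts: "finite (hverts n k M)"
  by (rule finite_subset[of _ "Pow (ksets n k)"]) (auto simp: hverts_def finite_ksets)

lemma hvertsD:
  assumes "H \<in> hverts n k M"
  shows "H \<subseteq> ksets n k" "card H = M" "finite H"
  using assms finite_subset[OF _ finite_ksets] by (auto simp: hverts_def)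

lemma hverts_card_le: "H \<in> hverts n k M \<Longrightarrow> M \<le> n choose k"
  by (metis card_ksets card_mono finite_ksets hvertsD(1,2))

lemma exchange_in_hverts:
  assumes "x \<in> hverts n k M" "a \<in> x" "b \<in> ksets n k" "b \<notin> x"
  shows "insert b (x - {a}) \<in> hverts n k M"
  using assms hvertsD[OF assms(1)] card_Diff1_less[of x a]
  by (auto simp: hverts_def card_insert_if)

lemma hadj_iff:
  "hadj n k M x y \<longleftrightarrow> x \<in> hverts n k M \<and> (\<exists>a\<in>x. \<exists>b\<in>ksets n k - x. y = insert b (x - {a}))"
proof
  assume "hadj n k M x y"
  then obtain a b where "x \<in> hverts n k M" and y: "y \<in> hverts n k M" and "a \<in> x"
      and b: "b \<in> y - x" and "x - {a} = y - {b}"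
    unfolding hadj_def by blast
  moreover from this have "y = insert b (x - {a})" by blast
  moreover have "b \<in> ksets n k" using hvertsD(1)[OF y] b by blast
  ultimately show "x \<in> hverts n k M \<and> (\<exists>a\<in>x. \<exists>b\<in>ksets n k - x. y = insert b (x - {a}))"
    by blast
next
  assume "x \<in> hverts n k M \<and> (\<exists>a\<in>x. \<exists>b\<in>ksets n k - x. y = insert b (x - {a}))"
  then obtain a b where "x \<in> hverts n k M" "a \<in> x" "b \<in> ksets n k" "b \<notin> x"
      "y = insert b (x - {a})"
    by blast
  then show "hadj n k M x y"
    unfolding hadj_def using exchange_in_hverts by (intro conjI exI[of _ a] exI[of _ b]) auto
qed

lemma hadj_in_hverts: "hadj n k M x y \<Longrightarrow> x \<in> hverts n k M \<and> y \<in> hverts n k M"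
  by (simp add: hadj_def)

lemma hverts_connected:
  assumes "x \<in> hverts n k M" "y \<in> hverts n k M"
  shows "\<exists>l. has_walk (hadj n k M) x y l"
  using assms(2)
proof (induction "card (y - x)" arbitrary: y rule: less_induct)
  case less
  have card_eq: "card y = card x" using hvertsD(2) assms(1) less.prems by metis
  show ?case
  proof (cases "y \<subseteq> x")
    case True
    have "y = x" using card_subset_eq[OF hvertsD(3)[OF assms(1)] True card_eq] .
    then have "has_walk (hadj n k M) x y 0" by (simp add: has_walk_0_iff)
    then show ?thesis ..
  next
    case False
    then obtain b where b: "b \<in> y" "b \<notin> x" by blast
    have "\<not> x \<subseteq> y"
      using b card_subset_eq[OF hvertsD(3)[OF less.prems] _ card_eq[symmetric]] by blast
    then obtain a where a: "a \<in> x" "a \<notin> y" by blast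
    define y' where "y' = insert a (y - {b})"
    have y': "y' \<in> hverts n k M"
      unfolding y'_def using exchange_in_hverts less.prems a b hvertsD(1)[OF assms(1)] by blast
    have "y' - x = (y - x) - {b}" using a b by (auto simp: y'_def)
    then have "card (y' - x) < card (y - x)"
      using b hvertsD(3)[OF less.prems] by (metis DiffI card_Diff1_less finite_Diff)
    then obtain l where "has_walk (hadj n k M) x y' l" using less.hyps y' by blast
    moreover have "hadj n k M y' y"
      unfolding hadj_iff using y' a b hvertsD(1)[OF less.prems]
      by (intro conjI bexI[of _ a] bexI[of _ b]) (auto simp: y'_def)
    ultimately have "has_walk (hadj n k M) x y (Suc l)"
      unfolding has_walk_Suc_iff by blast
    then show ?thesis ..
  qed
qed

definition hnbhd :: "nat \<Rightarrow> nat \<Rightarrow> nat \<Rightarrow> nat set set \<Rightarrow> nat set set set" where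
  "hnbhd n k M v = insert v {w. hadj n k M v w}"

lemma hwalk_eq:
  "hwalk n k M v w =
     (if w \<in> hnbhd n k M v then 1 / (real M * (real (n choose k) - real M) + 1) else 0)"
  unfolding hwalk_def hnbhd_def by auto

lemma hnbhd_subset: "v \<in> hverts n k M \<Longrightarrow> hnbhd n k M v \<subseteq> hverts n k M"
  unfolding hnbhd_def using hadj_in_hverts by blast

lemma finite_hnbhd: "finite (hnbhd n k M v)"
proof -
  have "{w. hadj n k M v w} \<subseteq> hverts n k M" using hadj_in_hverts by blast
  then show ?thesis unfolding hnbhd_def using finite_hverts finite_subset by blast
qed

lemma exchange_in_hnbhd:
  assumes "x \<in> hverts n k M" "a \<in> x" "b \<in> ksets n k" "b \<notin> x - {a}"
  shows "insert b (x - {a}) \<in> hnbhd n k M x"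
  using assms by (cases "b = a") (auto simp: hnbhd_def hadj_iff insert_absorb)

lemma card_hnbhd_le:
  assumes "x \<in> hverts n k M"
  shows "card (hnbhd n k M x) \<le> M * ((n choose k) - M) + 1"
proof -
  let ?E = "x \<times> (ksets n k - x)"
  have sub: "{w. hadj n k M x w} \<subseteq> (\<lambda>(a, b). insert b (x - {a})) ` ?E"
    unfolding hadj_iff by auto
  have fin: "finite ?E" using hvertsD(3)[OF assms] finite_ksets by blast
  then have "card {w. hadj n k M x w} \<le> card ?E"
    using sub by (meson card_image_le card_mono finite_imageI order_trans)
  also have "\<dots> = M * ((n choose k) - M)"
    using hvertsD[OF assms] by (simp add: card_cartesian_product card_Diff_subset card_ksets)
  finally show ?thesis
    using finite_subset[OF sub finite_imageI[OF fin]]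
    unfolding hnbhd_def by (simp add: card_insert_if)
qed

lemma card_common_hnbhd_ge:
  assumes "hadj n k M x y"
  shows "n choose k \<le> card (hnbhd n k M x \<inter> hnbhd n k M y)"
proof -
  obtain a b where x: "x \<in> hverts n k M" and a: "a \<in> x" and b: "b \<in> ksets n k" "b \<notin> x"
    and y: "y = insert b (x - {a})"
    using assms unfolding hadj_iff by blast
  have yV: "y \<in> hverts n k M" "b \<in> y" "a \<notin> y" "y - {b} = x - {a}"
    using exchange_in_hverts[OF x a b] y a b by auto
  have ak: "a \<in> ksets n k" using a hvertsD(1)[OF x] by blast
  \<comment> \<open>Common neighbours indexed by k-sets: \<open>x - c + b\<close> for \<open>c \<in> x\<close>, \<open>x - a + c\<close> for \<open>c \<notin> x\<close>,
    except that \<open>c = a\<close> indexes \<open>x\<close> itself.\<close>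
  define g where
    "g c = (if c = a then x else if c \<in> x then insert b (x - {c}) else insert c (x - {a}))" for c
  have "g c \<in> hnbhd n k M x \<inter> hnbhd n k M y" if c: "c \<in> ksets n k" for c
  proof -
    have "g c \<in> hnbhd n k M x"
      using exchange_in_hnbhd[OF x] a b c by (auto simp: g_def hnbhd_def)
    moreover consider "c = a" | "c \<noteq> a" "c \<in> x" | "c \<notin> x" by blast
    then have "g c \<in> hnbhd n k M y"
    proof cases
      case 1
      have "a \<notin> y - {b}" using yV(3) by blast
      then have "insert a (y - {b}) \<in> hnbhd n k M y" by (rule exchange_in_hnbhd[OF yV(1,2) ak])
      moreover have "g c = insert a (y - {b})" using 1 a yV(4) by (auto simp: g_def)
      ultimately show ?thesis by simp
    next
      case 2
      then have "c \<in> y" using yV(4) by blast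
      moreover have "a \<notin> y - {c}" using yV(3) by blast
      ultimately have "insert a (y - {c}) \<in> hnbhd n k M y" by (rule exchange_in_hnbhd[OF yV(1) _ ak])
      moreover have "g c = insert a (y - {c})" using 2 a b y by (auto simp: g_def)
      ultimately show ?thesis by simp
    next
      case 3
      then have "c \<notin> y - {b}" using yV(4) by blast
      then have "insert c (y - {b}) \<in> hnbhd n k M y" by (rule exchange_in_hnbhd[OF yV(1,2) c])
      moreover have "g c = insert c (y - {b})" using 3 a yV(4) by (auto simp: g_def)
      ultimately show ?thesis by simp
    qed
    ultimately show ?thesis by blast
  qed
  moreover have "inj_on g (ksets n k)"
  proof (rule inj_onI)
    fix c1 c2 assume "g c1 = g c2"
    moreover have "x - g a = {}" by (simp add: g_def)
    moreover have "x - g c = {c}" if "c \<in> x" "c \<noteq> a" for c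
      using that b by (auto simp: g_def)
    moreover have "x - g c = {a} \<and> g c - x = {c}" if "c \<notin> x" for c
      using that a by (auto simp: g_def)
    ultimately show "c1 = c2" using a by (metis insert_not_empty singleton_inject)
  qed
  ultimately have "card (ksets n k) \<le> card (hnbhd n k M x \<inter> hnbhd n k M y)"
    by (intro card_inj_on_le) (auto simp: finite_hnbhd)
  then show ?thesis by (simp add: card_ksets)
qed

lemma image_in_hverts:
  assumes "inj \<sigma>" "\<sigma> ` ksets n k \<subseteq> ksets n k" "x \<in> hverts n k M"
  shows "\<sigma> ` x \<in> hverts n k M"
  using assms hvertsD[OF assms(3)] by (auto simp: hverts_def card_image inj_on_subset)

lemma hadj_image:
  assumes "inj \<sigma>" "\<sigma> ` ksets n k \<subseteq> ksets n k" "hadj n k M x y"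
  shows "hadj n k M (\<sigma> ` x) (\<sigma> ` y)"
proof -
  obtain a b where x: "x \<in> hverts n k M" and "a \<in> x" "b \<in> ksets n k" "b \<notin> x"
    and "y = insert b (x - {a})"
    using assms(3) unfolding hadj_iff by blast
  then have "\<sigma> ` y = insert (\<sigma> b) (\<sigma> ` x - {\<sigma> a})" "\<sigma> a \<in> \<sigma> ` x"
      "\<sigma> b \<in> ksets n k - \<sigma> ` x"
    using assms(1,2) by (auto simp: image_set_diff inj_image_mem_iff)
  then show ?thesis
    unfolding hadj_iff using image_in_hverts[OF assms(1,2) x] by blast
qed

lemma image_in_hnbhd:
  assumes "inj \<sigma>" "\<sigma> ` ksets n k \<subseteq> ksets n k" "w \<in> hnbhd n k M v"
  shows "\<sigma> ` w \<in> hnbhd n k M (\<sigma> ` v)"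
  using assms hadj_image[OF assms(1,2)] unfolding hnbhd_def by auto

lemma transpose_image_eq_or_hadj:
  assumes "z \<in> hverts n k M" "a \<in> ksets n k" "b \<in> ksets n k"
  shows "transpose a b ` z = z \<or> hadj n k M z (transpose a b ` z)"
proof (cases "a \<in> z \<longleftrightarrow> b \<in> z")
  case False
  then consider "a \<in> z" "b \<notin> z" | "b \<in> z" "a \<notin> z" by blast
  then show ?thesis
  proof cases
    case 1
    then have "transpose a b ` z = insert b (z - {a})"
      by (auto simp: in_transpose_image_iff transpose_def)
    then show ?thesis unfolding hadj_iff using 1 assms by blast
  next
    case 2
    then have "transpose a b ` z = insert a (z - {b})"
      by (auto simp: in_transpose_image_iff transpose_def)
    then show ?thesis unfolding hadj_iff using 2 assms by blast
  qed
qed simp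

lemma card_hnbhd_diff_le:
  assumes "hadj n k M x y"
  shows "real (card (hnbhd n k M x - hnbhd n k M y))
           \<le> real M * (real (n choose k) - real M) + 1 - real (n choose k)"
proof -
  let ?X = "hnbhd n k M x" and ?Y = "hnbhd n k M y"
  have x: "x \<in> hverts n k M" using hadj_in_hverts[OF assms] ..
  have "real (card ?X) \<le> real (M * ((n choose k) - M) + 1)"
    using card_hnbhd_le[OF x] by (simp only: of_nat_le_iff)
  also have "\<dots> = real M * (real (n choose k) - real M) + 1"
    using hverts_card_le[OF x] by (simp add: of_nat_diff)
  finally have "real (card ?X) \<le> real M * (real (n choose k) - real M) + 1" .
  moreover have "real (card (?X - ?Y)) = real (card ?X) - real (card (?X \<inter> ?Y))"
    using card_Diff_subset_Int[of ?X ?Y] card_mono[OF finite_hnbhd Int_lower1, of n k M x ?Y]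
    by (simp add: finite_hnbhd of_nat_diff)
  moreover have "real (n choose k) \<le> real (card (?X \<inter> ?Y))"
    using card_common_hnbhd_ge[OF assms] by simp
  ultimately show ?thesis by linarith
qed

lemma hnbhd_step:
  assumes "hadj n k M x y"
  shows "\<exists>f. bij_betw f (hnbhd n k M x) (hnbhd n k M y) \<and>
           (\<forall>z\<in>hnbhd n k M x. f z = z \<or> hadj n k M z (f z)) \<and>
           (\<Sum>z\<in>hnbhd n k M x. of_bool (f z \<noteq> z))
             \<le> real M * (real (n choose k) - real M) + 1 - real (n choose k)"
proof -
  obtain a b where x: "x \<in> hverts n k M" and a: "a \<in> x" and b: "b \<in> ksets n k" "b \<notin> x"
    and y: "y = insert b (x - {a})"
    using assms unfolding hadj_iff by blast
  have ak: "a \<in> ksets n k" using a hvertsD(1)[OF x] by blast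
  let ?X = "hnbhd n k M x" and ?Y = "hnbhd n k M y" and ?T = "(`) (transpose a b)"
  let ?f = "\<lambda>z. if z \<in> ?Y then z else ?T z"
  have Tk: "transpose a b ` ksets n k \<subseteq> ksets n k" using ak b by simp
  have Txy: "?T x = y" using a b y by (auto simp: in_transpose_image_iff transpose_def)
  have TT: "?T (?T z) = z" for z by (simp add: image_image)
  have Tyx: "?T y = x" using Txy TT by metis
  have T_hnbhd: "?T w \<in> hnbhd n k M (?T v)" if "w \<in> hnbhd n k M v" for v w
    using image_in_hnbhd[OF inj_transpose Tk that] .
  have "bij_betw ?T ?X ?Y"
    using T_hnbhd[of _ x] T_hnbhd[of _ y] unfolding Txy Tyx
    by (intro bij_betw_byWitness[where f' = ?T]) (auto simp: TT)
  then have bij: "bij_betw ?f ?X ?Y"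
    using TT finite_hnbhd by (intro bij_betw_fixing_common) auto
  have "\<forall>z\<in>?X. ?f z = z \<or> hadj n k M z (?f z)"
    using transpose_image_eq_or_hadj[OF _ ak b(1)] hnbhd_subset[OF x] by auto
  moreover have "(\<Sum>z\<in>?X. of_bool (?f z \<noteq> z))
      \<le> real M * (real (n choose k) - real M) + 1 - real (n choose k)"
  proof -
    have "(\<Sum>z\<in>?X. of_bool (?f z \<noteq> z)) \<le> (\<Sum>z\<in>?X. of_bool (z \<notin> ?Y) :: real)"
      by (intro sum_mono) auto
    also have "\<dots> = real (card (?X - ?Y))"
      using finite_hnbhd[of n k M x] by (simp add: set_diff_eq Int_def)
    also have "\<dots> \<le> real M * (real (n choose k) - real M) + 1 - real (n choose k)"
      by (rule card_hnbhd_diff_le[OF assms])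
    finally show ?thesis .
  qed
  ultimately show ?thesis using bij by blast
qed

theorem mainTheorem7:
  fixes n k M :: nat and H1 H2 :: "nat set set"
  assumes "k \<ge> 2" and "n \<ge> k" and "1 \<le> M" and "M \<le> (n choose k) - 1"
    and "H1 \<in> hverts n k M" and "H2 \<in> hverts n k M" and "H1 \<noteq> H2"
  shows "ollivier (hverts n k M) (hadj n k M) (hwalk n k M) H1 H2
           \<ge> real (n choose k) / (real M * (real (n choose k) - real M) + 1)"
proof -
  let ?V = "hverts n k M" and ?d = "gdist (hadj n k M)"
  define D where "D = real M * (real (n choose k) - real M) + 1"
  have "real M * (real (n choose k) - real M) \<ge> 0"
    using hverts_card_le[OF assms(5)] by simp
  then have "D > 0" unfolding D_def by linarith
  obtain L where walk: "has_walk (hadj n k M) H1 H2 L" and dist: "?d H1 H2 = real L"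
    using hverts_connected[OF assms(5,6)] shortest_walk by metis
  have "L \<noteq> 0" using walk assms(7) by (auto simp: has_walk_0_iff)
  obtain F where F: "bij_betw F (hnbhd n k M H1) (hnbhd n k M H2)"
    and cost: "(\<Sum>z\<in>hnbhd n k M H1. ?d z (F z)) \<le> real L * (D - real (n choose k))"
    using bij_along_walk[where V = ?V and N = "hnbhd n k M",
        OF hverts_connected hnbhd_subset hadj_in_hverts hnbhd_step walk assms(5)]
    unfolding D_def by blast
  have "transport ?V ?d (hwalk n k M H1) (hwalk n k M H2)
      \<le> 1 / D * (\<Sum>z\<in>hnbhd n k M H1. ?d z (F z))"
    using \<open>D > 0\<close> F assms(5,6) finite_hverts hnbhd_subset
    by (intro transport_le_bij_cost) (auto simp: hwalk_eq D_def gdist_def)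
  also have "\<dots> \<le> real L * ((D - real (n choose k)) / D)"
    using cost \<open>D > 0\<close> by (simp add: divide_right_mono)
  finally show ?thesis
    using \<open>L \<noteq> 0\<close> \<open>D > 0\<close> unfolding ollivier_def dist D_def[symmetric]
    by (simp add: field_simps)
qed

end
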